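(* Let $n\geq 6$ be an integer. Then $\Delta_D(S_n)^*$ is connected if and only if neither $n$ nor $n-1$ is a prime.
   Context: $S_n$ is the symmetric group. The deep commuting graph $\Delta_D(G)$ has vertex set $G$, distinct vertices adjacent iff their preimages commute in a Schur cover $\tilde G$ of $G$ (a central extension $\{e\}\to M(G)\to\tilde G\to G\to\{e\}$ with kernel contained in $Z(\tilde G)\cap[\tilde G,\tilde G]$, of maximal order; $M(G)$ the Schur multiplier). A vertex is dominant if adjacent to every other vertex; the reduced graph $\Gamma^*$ is the subgraph induced by the non-dominant vertices. *)

theory Defs
  imports "HOL-Algebra.Algebra" "HOL-Computational_Algebra.Primes"
begin

definition group_center :: "('c, 'd) monoid_scheme \<Rightarrow> 'c set" where
  "group_center H = {z \<in> carrier H. \<forall>h \<in> carrier H. z \<otimes>\<^bsub>H\<^esub> h = h \<otimes>\<^bsub>H\<^esub> z}"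

definition stem_extension ::
  "('c, 'd) monoid_scheme \<Rightarrow> ('c \<Rightarrow> 'a) \<Rightarrow> ('a, 'b) monoid_scheme \<Rightarrow> bool" where
  "stem_extension H \<phi> G \<longleftrightarrow>
     group H \<and> group G \<and> \<phi> \<in> hom H G \<and> \<phi> ` carrier H = carrier G \<and>
     kernel H G \<phi> \<subseteq> group_center H \<inter> derived H (carrier H)"

text \<open>Every finite group is isomorphic to one with carrier in
  the type nat, so comparing against stem extensions with carrier in nat is
  comparing against all (finite) stem extensions.\<close>
definition schur_cover ::
  "('c, 'd) monoid_scheme \<Rightarrow> ('c \<Rightarrow> 'a) \<Rightarrow> ('a, 'b) monoid_scheme \<Rightarrow> bool" where
  "schur_cover H \<phi> G \<longleftrightarrow>
     stem_extension H \<phi> G \<and> finite (kernel H G \<phi>) \<and>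
     (\<forall>(K :: nat monoid) rho. stem_extension K rho G \<longrightarrow>
        finite (kernel K G rho) \<and> card (kernel K G rho) \<le> card (kernel H G \<phi>))"

definition deep_adj ::
  "('c, 'd) monoid_scheme \<Rightarrow> ('c \<Rightarrow> 'a) \<Rightarrow> ('a, 'b) monoid_scheme \<Rightarrow> 'a \<Rightarrow> 'a \<Rightarrow> bool" where
  "deep_adj H \<phi> G x y \<longleftrightarrow> x \<noteq> y \<and>
     (\<exists>a \<in> carrier H. \<exists>b \<in> carrier H. \<phi> a = x \<and> \<phi> b = y \<and>
        a \<otimes>\<^bsub>H\<^esub> b = b \<otimes>\<^bsub>H\<^esub> a)"

definition deep_dominant ::
  "('c, 'd) monoid_scheme \<Rightarrow> ('c \<Rightarrow> 'a) \<Rightarrow> ('a, 'b) monoid_scheme \<Rightarrow> 'a \<Rightarrow> bool" where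
  "deep_dominant H \<phi> G x \<longleftrightarrow> (\<forall>y \<in> carrier G. y \<noteq> x \<longrightarrow> deep_adj H \<phi> G x y)"

definition reduced_vertices ::
  "('c, 'd) monoid_scheme \<Rightarrow> ('c \<Rightarrow> 'a) \<Rightarrow> ('a, 'b) monoid_scheme \<Rightarrow> 'a set" where
  "reduced_vertices H \<phi> G = {x \<in> carrier G. \<not> deep_dominant H \<phi> G x}"

definition graph_connected_on :: "'a set \<Rightarrow> ('a \<Rightarrow> 'a \<Rightarrow> bool) \<Rightarrow> bool" where
  "graph_connected_on V E \<longleftrightarrow>
     (\<forall>u \<in> V. \<forall>v \<in> V. (u, v) \<in> {(a, b). a \<in> V \<and> b \<in> V \<and> E a b}\<^sup>*)"

end

theory Submission
  imports Defs
begin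

text \<open>Deep adjacency in a stem extension of G joins elements whose images commute in G, and it
  contains the power graph of G, since a lift of x commutes with its own powers. In S_n the identity
  is the only dominant vertex: every other permutation fails to commute with some transposition.

  If m \<in> {n, n - 1} is prime, the m-cycle (1 2 ... m) is centralised only by its powers, and each
  nontrivial power generates the same cyclic group. Hence every vertex reachable from the m-cycle in
  the commuting graph commutes with it, and the transposition (1 2) is unreachable.

  If neither n nor n - 1 is prime (so n \<ge> 9), already the power graph on the nontrivial
  permutations is connected. Every permutation is linked to one of some prime order p; that one
  commutes with an element of order coprime to p which leads to a transposition (a transposition or
  3-cycle on fixed points, or an involution swapping two orbits of size p); and two transpositions
  are linked through a disjoint 3-cycle.\<close>

section \<open>Paths in a graph\<close>

definition graph_linked :: "'a set \<Rightarrow> ('a \<Rightarrow> 'a \<Rightarrow> bool) \<Rightarrow> 'a \<Rightarrow> 'a \<Rightarrow> bool" where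
  "graph_linked V E u v \<longleftrightarrow> (u, v) \<in> {(a, b). a \<in> V \<and> b \<in> V \<and> E a b}\<^sup>*"

lemma graph_connected_on_iff_linked:
  "graph_connected_on V E \<longleftrightarrow> (\<forall>u\<in>V. \<forall>v\<in>V. graph_linked V E u v)"
  unfolding graph_connected_on_def graph_linked_def ..

lemma graph_linked_refl: "graph_linked V E u u"
  by (simp add: graph_linked_def)

lemma graph_linked_edge: "u \<in> V \<Longrightarrow> v \<in> V \<Longrightarrow> E u v \<Longrightarrow> graph_linked V E u v"
  by (auto simp: graph_linked_def)

lemma graph_linked_trans:
  "graph_linked V E u v \<Longrightarrow> graph_linked V E v w \<Longrightarrow> graph_linked V E u w"
  unfolding graph_linked_def by (rule rtrancl_trans)

lemma graph_linked_sym: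
  assumes "symp E" "graph_linked V E u v"
  shows "graph_linked V E v u"
proof -
  have "sym {(a, b). a \<in> V \<and> b \<in> V \<and> E a b}"
    using assms(1) by (auto simp: sym_def dest: sympD)
  then show ?thesis
    using assms(2) unfolding graph_linked_def by (blast intro: sym_rtrancl[THEN symD])
qed

lemma graph_linked_mono:
  assumes "graph_linked V E u v" "\<And>a b. a \<in> V \<Longrightarrow> b \<in> V \<Longrightarrow> E a b \<Longrightarrow> E' a b"
  shows "graph_linked V E' u v"
  using assms(1) unfolding graph_linked_def
  by (rule rtrancl_mono[THEN subsetD, rotated]) (auto intro: assms(2))

lemma graph_linked_invariant:
  assumes "graph_linked V E u v" "P u"
    and "\<And>a b. a \<in> V \<Longrightarrow> b \<in> V \<Longrightarrow> E a b \<Longrightarrow> P a \<Longrightarrow> P b"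
  shows "P v"
  using assms(1,2) unfolding graph_linked_def
  by (induction rule: rtrancl_induct) (auto intro: assms(3))

lemma graph_connected_on_mono:
  assumes "graph_connected_on V E" "\<And>a b. a \<in> V \<Longrightarrow> b \<in> V \<Longrightarrow> E a b \<Longrightarrow> E' a b"
  shows "graph_connected_on V E'"
  unfolding graph_connected_on_iff_linked
proof (intro ballI)
  fix u v assume "u \<in> V" "v \<in> V"
  then have "graph_linked V E u v" using assms(1) unfolding graph_connected_on_iff_linked by blast
  then show "graph_linked V E' u v" by (rule graph_linked_mono) (rule assms(2))
qed

section \<open>Deep adjacency in a stem extension\<close>

lemma deep_adj_sym: "symp (deep_adj H \<phi> G)"
  unfolding deep_adj_def by (rule sympI) metis

context
  fixes H :: "('c, 'd) monoid_scheme" and \<phi> :: "'c \<Rightarrow> 'a" and G :: "('a, 'b) monoid_scheme"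
  assumes stem: "stem_extension H \<phi> G"
begin

interpretation H: group H
  using stem by (simp add: stem_extension_def)

interpretation \<phi>: group_hom H G \<phi>
  using stem by (simp add: stem_extension_def group_hom_def group_hom_axioms_def)

lemma stem_extension_preimage:
  assumes "x \<in> carrier G"
  obtains a where "a \<in> carrier H" "\<phi> a = x"
proof -
  have "x \<in> \<phi> ` carrier H" using assms stem by (simp add: stem_extension_def)
  then show thesis using that by blast
qed

lemma deep_adj_imp_commute:
  assumes "deep_adj H \<phi> G x y"
  shows "x \<otimes>\<^bsub>G\<^esub> y = y \<otimes>\<^bsub>G\<^esub> x"
proof -
  obtain a b where ab: "a \<in> carrier H" "b \<in> carrier H" "\<phi> a = x" "\<phi> b = y"
    "a \<otimes>\<^bsub>H\<^esub> b = b \<otimes>\<^bsub>H\<^esub> a"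
    using assms unfolding deep_adj_def by blast
  have "x \<otimes>\<^bsub>G\<^esub> y = \<phi> (a \<otimes>\<^bsub>H\<^esub> b)" using ab(1-4) by simp
  also have "\<dots> = \<phi> (b \<otimes>\<^bsub>H\<^esub> a)" using ab(5) by simp
  also have "\<dots> = y \<otimes>\<^bsub>G\<^esub> x" using ab(1-4) by simp
  finally show ?thesis .
qed

lemma deep_adj_nat_pow:
  assumes "x \<in> carrier G" "x [^]\<^bsub>G\<^esub> (k::nat) \<noteq> x"
  shows "deep_adj H \<phi> G x (x [^]\<^bsub>G\<^esub> k)"
proof -
  obtain a where a: "a \<in> carrier H" "\<phi> a = x"
    using stem_extension_preimage assms(1) by blast
  have "\<phi> (a [^]\<^bsub>H\<^esub> k) = x [^]\<^bsub>G\<^esub> k"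
    using a by (simp add: \<phi>.hom_nat_pow)
  moreover have "a \<otimes>\<^bsub>H\<^esub> a [^]\<^bsub>H\<^esub> k = a [^]\<^bsub>H\<^esub> k \<otimes>\<^bsub>H\<^esub> a"
    using a(1) H.nat_pow_Suc H.nat_pow_Suc2 by simp
  moreover have "a [^]\<^bsub>H\<^esub> k \<in> carrier H" using a(1) by simp
  ultimately show ?thesis
    using a assms(2) unfolding deep_adj_def by fastforce
qed

lemma deep_dominant_one: "deep_dominant H \<phi> G \<one>\<^bsub>G\<^esub>"
  unfolding deep_dominant_def
proof (intro ballI impI)
  fix y assume y: "y \<in> carrier G" "y \<noteq> \<one>\<^bsub>G\<^esub>"
  then obtain b where "b \<in> carrier H" "\<phi> b = y" using stem_extension_preimage by blast
  then show "deep_adj H \<phi> G \<one>\<^bsub>G\<^esub> y"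
    using y(2) unfolding deep_adj_def by (metis H.l_one H.one_closed H.r_one \<phi>.hom_one)
qed

lemma not_deep_dominant:
  assumes "y \<in> carrier G" "x \<otimes>\<^bsub>G\<^esub> y \<noteq> y \<otimes>\<^bsub>G\<^esub> x"
  shows "\<not> deep_dominant H \<phi> G x"
proof
  assume "deep_dominant H \<phi> G x"
  moreover have "y \<noteq> x" using assms(2) by blast
  ultimately have "deep_adj H \<phi> G x y" using assms(1) unfolding deep_dominant_def by blast
  then show False using assms(2) deep_adj_imp_commute by blast
qed

end

section \<open>Powers of a function\<close>

lemma comp_funpow_commute:
  assumes "f \<circ> g = g \<circ> f"
  shows "f \<circ> g ^^ k = g ^^ k \<circ> f"
proof (induction k)
  case (Suc k)
  have "f \<circ> g ^^ Suc k = (f \<circ> g) \<circ> g ^^ k" by (simp only: funpow.simps(2) o_assoc)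
  also have "\<dots> = g \<circ> (f \<circ> g ^^ k)" by (metis assms o_assoc)
  also have "\<dots> = g ^^ Suc k \<circ> f" by (simp only: Suc funpow.simps(2) o_assoc)
  finally show ?case .
qed simp

lemma funpow_comp_distrib:
  assumes "f \<circ> g = g \<circ> f"
  shows "(f \<circ> g) ^^ k = f ^^ k \<circ> g ^^ k"
proof (induction k)
  case (Suc k)
  have "(f \<circ> g) ^^ Suc k = f \<circ> (g \<circ> f ^^ k) \<circ> g ^^ k"
    by (simp only: Suc funpow.simps(2) o_assoc)
  also have "\<dots> = f ^^ Suc k \<circ> g ^^ Suc k"
    by (simp only: comp_funpow_commute[OF assms[symmetric]] funpow.simps(2) o_assoc)
  finally show ?case .
qed simp

lemma funpow_commute_apply: "(f ^^ m) ((f ^^ n) x) = (f ^^ n) ((f ^^ m) x)"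
proof -
  have "(f ^^ m) ((f ^^ n) x) = (f ^^ (m + n)) x" by (simp add: funpow_add)
  also have "\<dots> = (f ^^ (n + m)) x" by (simp only: add.commute)
  also have "\<dots> = (f ^^ n) ((f ^^ m) x)" by (simp add: funpow_add)
  finally show ?thesis .
qed

lemma funpow_eq_id_dvd: "f ^^ m = id \<Longrightarrow> m dvd k \<Longrightarrow> f ^^ k = id"
  by (metis dvd_def funpow_mult id_funpow)

lemma funpow_mod_eq_1:
  assumes "f ^^ m = id" "k mod m = 1 mod m"
  shows "f ^^ k = f"
proof
  fix x
  have fx: "(f ^^ m) x = x" using assms(1) by simp
  have "(f ^^ k) x = (f ^^ (k mod m)) x" using funpow_mod_eq[OF fx] by simp
  also have "\<dots> = (f ^^ 1) x" using funpow_mod_eq[OF fx, of 1] assms(2) by simp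
  finally show "(f ^^ k) x = f x" by simp
qed

lemma exists_mult_mod_eq_1:
  assumes "coprime a (b::nat)"
  obtains u where "a * u mod b = 1 mod b"
proof (cases "a = 0")
  case False
  obtain x y where "a * x = b * y + gcd a b" using bezout_nat[OF False] by blast
  then have "a * x = 1 + y * b" using assms by simp
  then have "a * x mod b = 1 mod b" by (simp only: mod_mult_self1)
  then show thesis by (rule that)
qed (use assms in auto)

lemma funpow_coprime_generates:
  assumes "f ^^ m = id" "coprime k m"
  obtains j where "(f ^^ k) ^^ j = f"
proof -
  obtain j where "k * j mod m = 1 mod m" using exists_mult_mod_eq_1 assms(2) by blast
  then have "(f ^^ k) ^^ j = f" by (simp add: funpow_mult funpow_mod_eq_1[OF assms(1)])
  then show thesis by (rule that)
qed

lemma funpow_prime_order_dvd: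
  assumes "f ^^ p = id" "Factorial_Ring.prime p" "f \<noteq> id" "f ^^ k = id"
  shows "p dvd k"
proof (rule ccontr)
  assume "\<not> p dvd k"
  then have "coprime k p" using prime_imp_coprime[OF assms(2)] coprime_commute by metis
  then obtain j where "(f ^^ k) ^^ j = f" using funpow_coprime_generates[OF assms(1)] by blast
  then show False using assms(3,4) by simp
qed

lemma funpow_prime_order_generates:
  assumes "f ^^ p = id" "Factorial_Ring.prime p" "f ^^ k \<noteq> id"
  obtains j where "(f ^^ k) ^^ j = f"
proof (rule funpow_coprime_generates[OF assms(1)])
  have "\<not> p dvd k" using assms(1,3) funpow_eq_id_dvd by blast
  then show "coprime k p" using prime_imp_coprime[OF assms(2)] coprime_commute by metis
qed

lemma funpow_prime_order_fixes_moved: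
  assumes "f ^^ p = id" "Factorial_Ring.prime p" "f x \<noteq> x" "(f ^^ d) x = x"
  shows "f ^^ d = id"
proof (rule ccontr)
  assume "f ^^ d \<noteq> id"
  then obtain j where "(f ^^ d) ^^ j = f" using funpow_prime_order_generates[OF assms(1,2)] by blast
  moreover have "((f ^^ d) ^^ j) x = x" using assms(4) by (induction j) simp_all
  ultimately show False using assms(3) by simp
qed

lemma funpow_prime_order_eq:
  assumes "f ^^ p = id" "Factorial_Ring.prime p" "inj f" "f x \<noteq> x" "(f ^^ i) x = (f ^^ j) x"
  shows "f ^^ i = f ^^ j"
proof -
  have le: "f ^^ i = f ^^ j" if "i \<le> j" "(f ^^ i) x = (f ^^ j) x" for i j
  proof -
    have "(f ^^ (j - i)) x = x" using funpow_diff[OF assms(3) that] .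
    then have "f ^^ (j - i) = id" by (rule funpow_prime_order_fixes_moved[OF assms(1,2,4)])
    then have "f ^^ (j - i) \<circ> f ^^ i = f ^^ i" by simp
    then show ?thesis using that(1) by (simp add: funpow_add[symmetric])
  qed
  show ?thesis
  proof (cases "i \<le> j")
    case True
    then show ?thesis using le assms(5) by blast
  next
    case False
    then show ?thesis using le[of j i] assms(5) by simp
  qed
qed

lemma card_funpow_orbit_prime:
  assumes "f ^^ p = id" "Factorial_Ring.prime p" "f x \<noteq> x"
  shows "card (range (\<lambda>k. (f ^^ k) x)) = p"
proof -
  have p0: "p > 0" using assms(2) prime_gt_0_nat by blast
  have "range (\<lambda>k. (f ^^ k) x) = (\<lambda>k. (f ^^ k) x) ` {0..<p}"
  proof (intro equalityI subsetI)
    fix w assume "w \<in> range (\<lambda>k. (f ^^ k) x)"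
    then obtain k where "w = (f ^^ k) x" by blast
    then have "w = (f ^^ (k mod p)) x"
      using funpow_mod_eq[where f = f and n = p and x = x and m = k] assms(1) by simp
    then show "w \<in> (\<lambda>k. (f ^^ k) x) ` {0..<p}" using p0 by auto
  qed auto
  moreover have "inj_on (\<lambda>k. (f ^^ k) x) {0..<p}"
  proof (rule inj_on_funpow_least)
    show "(f ^^ p) x = x" using assms(1) by simp
    show "(f ^^ m) x \<noteq> x" if "0 < m" "m < p" for m
    proof
      assume "(f ^^ m) x = x"
      then have "f ^^ m = id" by (rule funpow_prime_order_fixes_moved[OF assms])
      moreover have "f \<noteq> id" using assms(3) by auto
      ultimately have "p dvd m" using funpow_prime_order_dvd assms(1,2) by blast
      then show False using that by (simp add: nat_dvd_not_less)
    qed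
  qed
  ultimately show ?thesis by (simp add: card_image)
qed

section \<open>The power graph of a symmetric group\<close>

lemma exists_fresh:
  assumes "finite S" "length xs < card S"
  shows "\<exists>x\<in>S. x \<notin> set xs"
proof (rule ccontr)
  assume "\<not> ?thesis"
  then have "S \<subseteq> set xs" by blast
  then have "card S \<le> length xs" using card_mono[of "set xs" S] card_length[of xs] by simp
  then show False using assms(2) by simp
qed

definition nontrivial_perms :: "'a set \<Rightarrow> ('a \<Rightarrow> 'a) set" where
  "nontrivial_perms S = {p. p permutes S} - {id}"

definition power_adjacent :: "('a \<Rightarrow> 'a) \<Rightarrow> ('a \<Rightarrow> 'a) \<Rightarrow> bool" where
  "power_adjacent x y \<longleftrightarrow> x \<noteq> y \<and> (\<exists>k. y = x ^^ k \<or> x = y ^^ k)"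

abbreviation power_linked :: "'a set \<Rightarrow> ('a \<Rightarrow> 'a) \<Rightarrow> ('a \<Rightarrow> 'a) \<Rightarrow> bool" where
  "power_linked S \<equiv> graph_linked (nontrivial_perms S) power_adjacent"

lemma symp_power_adjacent: "symp power_adjacent"
  unfolding power_adjacent_def by (rule sympI) blast

lemma power_linked_sym: "power_linked S x y \<Longrightarrow> power_linked S y x"
  by (rule graph_linked_sym[OF symp_power_adjacent])

lemma nontrivial_perms_funpow:
  "x \<in> nontrivial_perms S \<Longrightarrow> x ^^ k \<noteq> id \<Longrightarrow> x ^^ k \<in> nontrivial_perms S"
  unfolding nontrivial_perms_def by (simp add: permutes_funpow)

lemma power_linked_funpow:
  assumes "x \<in> nontrivial_perms S" "x ^^ k \<noteq> id"
  shows "power_linked S x (x ^^ k)"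
proof (cases "x ^^ k = x")
  case False
  then show ?thesis
    using assms nontrivial_perms_funpow unfolding power_adjacent_def
    by (intro graph_linked_edge) auto
qed (simp add: graph_linked_refl)

text \<open>Commuting elements of coprime orders are both powers of their product.\<close>
lemma power_linked_coprime_orders:
  assumes x: "x \<in> nontrivial_perms S" and y: "y \<in> nontrivial_perms S"
    and comm: "x \<circ> y = y \<circ> x" and "x ^^ a = id" "y ^^ b = id" "coprime a b"
  shows "power_linked S x y"
proof -
  obtain u where u: "a * u mod b = 1 mod b" using exists_mult_mod_eq_1 assms(6) by blast
  obtain v where v: "b * v mod a = 1 mod a"
    using exists_mult_mod_eq_1[of b a] assms(6) by (auto simp: coprime_commute)
  have "(x \<circ> y) ^^ (a * u) = y"
    using funpow_comp_distrib[OF comm] funpow_mod_eq_1[OF assms(5) u] funpow_eq_id_dvd[OF assms(4)]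
    by simp
  moreover have "(x \<circ> y) ^^ (b * v) = x"
    using funpow_comp_distrib[OF comm] funpow_mod_eq_1[OF assms(4) v] funpow_eq_id_dvd[OF assms(5)]
    by simp
  moreover have xy: "x \<circ> y \<in> nontrivial_perms S"
  proof -
    have "x \<circ> y \<noteq> id" using \<open>(x \<circ> y) ^^ (a * u) = y\<close> y by (auto simp: nontrivial_perms_def)
    then show ?thesis using x y by (auto simp: nontrivial_perms_def permutes_compose)
  qed
  moreover have "x \<noteq> id" "y \<noteq> id" using x y by (auto simp: nontrivial_perms_def)
  ultimately have "power_linked S (x \<circ> y) y" "power_linked S (x \<circ> y) x"
    using power_linked_funpow[OF xy, of "a * u"] power_linked_funpow[OF xy, of "b * v"] by simp_all
  then show ?thesis by (metis graph_linked_trans power_linked_sym)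
qed

lemma power_linked_prime_order:
  assumes "finite S" "x \<in> nontrivial_perms S"
  obtains p y where "Factorial_Ring.prime p" "y \<in> nontrivial_perms S" "y ^^ p = id"
    "power_linked S x y"
proof -
  have "permutation x" using assms by (auto simp: nontrivial_perms_def permutation_permutes)
  then obtain m0 where "x ^^ m0 = id" "0 < m0" by (rule permutation_is_nilpotent)
  define m where "m = (LEAST m. 0 < m \<and> x ^^ m = id)"
  have m: "0 < m" "x ^^ m = id"
    using LeastI[of "\<lambda>m. 0 < m \<and> x ^^ m = id" m0] \<open>x ^^ m0 = id\<close> \<open>0 < m0\<close>
    unfolding m_def by auto
  have least: "x ^^ k \<noteq> id" if "0 < k" "k < m" for k
    using not_less_Least[of k "\<lambda>m. 0 < m \<and> x ^^ m = id"] that unfolding m_def by blast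
  have "m \<noteq> 1" using m assms(2) by (auto simp: nontrivial_perms_def)
  then obtain p where p: "Factorial_Ring.prime p" "p dvd m" using prime_factor_nat by blast
  then obtain q where q: "m = p * q" by (elim dvdE)
  have "0 < q" "q < m" using q m(1) prime_gt_1_nat[OF p(1)] by auto
  then have "x ^^ q \<noteq> id" using least by blast
  moreover have "(x ^^ q) ^^ p = id" using m(2) q by (simp add: funpow_mult mult.commute)
  ultimately show thesis
    using that[OF p(1)] nontrivial_perms_funpow[OF assms(2)] power_linked_funpow[OF assms(2)]
    by blast
qed

definition transpositions :: "'a set \<Rightarrow> ('a \<Rightarrow> 'a) set" where
  "transpositions S = {transpose a b | a b. a \<in> S \<and> b \<in> S \<and> a \<noteq> b}"

lemma transpose_in_nontrivial_perms:
  "a \<in> S \<Longrightarrow> b \<in> S \<Longrightarrow> a \<noteq> b \<Longrightarrow> transpose a b \<in> nontrivial_perms S"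
  by (simp add: nontrivial_perms_def permutes_swap_id transpose_eq_id_iff)

lemma transpose_funpow_2: "transpose a b ^^ 2 = id"
  by (simp add: numeral_2_eq_2)

lemma cycle_of_list_in_nontrivial_perms:
  assumes "cycle cs" "2 \<le> length cs" "set cs \<subseteq> S"
  shows "cycle_of_list cs \<in> nontrivial_perms S"
proof -
  obtain a b cs' where cs: "cs = a # b # cs'"
    using assms(2) by (metis One_nat_def Suc_1 Suc_le_length_iff)
  have "cycle_of_list cs a = b"
    using assms(1) unfolding cs by (simp add: id_outside_supp)
  moreover have "a \<noteq> b" using assms(1) cs by simp
  ultimately have "cycle_of_list cs \<noteq> id" by auto
  then show ?thesis
    using permutes_subset[OF cycle_permutes assms(3)] by (simp add: nontrivial_perms_def)
qed

lemma cycle_of_list_3_funpow_3: "cycle [a, b, c] \<Longrightarrow> cycle_of_list [a, b, c] ^^ 3 = id"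
  using cycle_is_id_root[of "[a, b, c]"] by (simp only: numeral_3_eq_3 length_Cons list.size(3))

lemma comp_cycle_of_list:
  assumes "bij y" "cycle cs"
  shows "y \<circ> cycle_of_list cs = cycle_of_list (map y cs) \<circ> y"
proof -
  \<comment> \<open>qualified, since plain \<open>inv\<close> is the group inverse of HOL-Algebra\<close>
  have "y \<circ> cycle_of_list cs = y \<circ> cycle_of_list cs \<circ> Hilbert_Choice.inv y \<circ> y"
    using assms(1) by (simp add: bij_is_inj o_assoc)
  also have "\<dots> = cycle_of_list (map y cs) \<circ> y"
    using conjugation_of_cycle[OF assms(2,1)] by simp
  finally show ?thesis .
qed

lemma comp_cycle_of_list_commute:
  assumes "bij y" "cycle cs" "\<And>w. w \<in> set cs \<Longrightarrow> y w = w"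
  shows "y \<circ> cycle_of_list cs = cycle_of_list cs \<circ> y"
proof -
  have "map y cs = cs" using assms(3) by (simp add: map_idI)
  then show ?thesis using comp_cycle_of_list[OF assms(1,2)] by simp
qed

lemma power_linked_transpose_if_fixed:
  assumes y: "y \<in> nontrivial_perms S" "y ^^ p = id" "odd p"
    and ab: "a \<in> S" "b \<in> S" "a \<noteq> b" "y a = a" "y b = b"
  shows "power_linked S y (transpose a b)"
proof -
  have "bij y" using y(1) permutes_bij by (auto simp: nontrivial_perms_def)
  then have "y \<circ> transpose a b = transpose a b \<circ> y"
    using comp_cycle_of_list_commute[of y "[a, b]"] ab by auto
  moreover have "coprime p 2" using y(3) by simp
  ultimately show ?thesis
    using power_linked_coprime_orders[OF y(1) transpose_in_nontrivial_perms[OF ab(1-3)] _ y(2)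
        transpose_funpow_2] by blast
qed

lemma power_linked_cycle3_if_fixed:
  assumes "y \<in> nontrivial_perms S" "y ^^ 2 = id"
    and "cycle [a, b, c]" "set [a, b, c] \<subseteq> S" "y a = a" "y b = b" "y c = c"
  shows "power_linked S y (cycle_of_list [a, b, c])"
proof -
  have "bij y" using assms(1) permutes_bij by (auto simp: nontrivial_perms_def)
  then have "y \<circ> cycle_of_list [a, b, c] = cycle_of_list [a, b, c] \<circ> y"
    using comp_cycle_of_list_commute[OF _ assms(3)] assms(5-7) by auto
  moreover have "cycle_of_list [a, b, c] ^^ 3 = id"
    using cycle_of_list_3_funpow_3[OF assms(3)] .
  moreover have "cycle_of_list [a, b, c] \<in> nontrivial_perms S"
    by (rule cycle_of_list_in_nontrivial_perms[OF assms(3) _ assms(4)]) simp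
  moreover have "coprime (2::nat) 3" by simp
  ultimately show ?thesis
    using power_linked_coprime_orders[OF assms(1)] assms(2) by blast
qed

lemma power_linked_transpositions:
  assumes "finite S" "7 \<le> card S" "t \<in> transpositions S" "t' \<in> transpositions S"
  shows "power_linked S t t'"
proof -
  obtain a b where t: "t = transpose a b" "a \<in> S" "b \<in> S" "a \<noteq> b"
    using assms(3) unfolding transpositions_def by blast
  obtain c d where t': "t' = transpose c d" "c \<in> S" "d \<in> S" "c \<noteq> d"
    using assms(4) unfolding transpositions_def by blast
  obtain e where e: "e \<in> S" "e \<notin> set [a, b, c, d]"
    using exists_fresh[OF assms(1), of "[a, b, c, d]"] assms(2) by auto
  obtain f where f: "f \<in> S" "f \<notin> set [a, b, c, d, e]"
    using exists_fresh[OF assms(1), of "[a, b, c, d, e]"] assms(2) by auto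
  obtain g where g: "g \<in> S" "g \<notin> set [a, b, c, d, e, f]"
    using exists_fresh[OF assms(1), of "[a, b, c, d, e, f]"] assms(2) by auto
  let ?z = "cycle_of_list [e, f, g]"
  have efg: "cycle [e, f, g]" "set [e, f, g] \<subseteq> S" using e f g by auto
  have z: "?z \<in> nontrivial_perms S" "?z ^^ 3 = id"
    using cycle_of_list_in_nontrivial_perms[OF efg(1) _ efg(2)] cycle_of_list_3_funpow_3[OF efg(1)]
    by simp_all
  have "power_linked S ?z t"
    unfolding t(1) by (rule power_linked_transpose_if_fixed[OF z _ t(2-4)]) (use e f g in auto)
  moreover have "power_linked S ?z t'"
    unfolding t'(1) by (rule power_linked_transpose_if_fixed[OF z _ t'(2-4)]) (use e f g in auto)
  ultimately show ?thesis by (metis graph_linked_trans power_linked_sym)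
qed

lemma comp_cycle_of_list_pair_commute:
  assumes "bij y" "y \<circ> y = id" "cycle (cs @ map y cs)"
  shows "y \<circ> (cycle_of_list cs \<circ> cycle_of_list (map y cs))
    = (cycle_of_list cs \<circ> cycle_of_list (map y cs)) \<circ> y"
proof -
  let ?c = "cycle_of_list cs" and ?d = "cycle_of_list (map y cs)"
  have cs: "cycle cs" "cycle (map y cs)" "set cs \<inter> set (map y cs) = {}"
    using assms(3) by auto
  have yd: "y \<circ> ?d = ?c \<circ> y"
    using comp_cycle_of_list[OF assms(1) cs(2)] assms(2) by (simp add: map_idI pointfree_idE)
  have "y \<circ> (?c \<circ> ?d) = ?d \<circ> (y \<circ> ?d)"
    using comp_cycle_of_list[OF assms(1) cs(1)] by (simp add: o_assoc)
  also have "\<dots> = (?d \<circ> ?c) \<circ> y" by (simp add: yd o_assoc)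
  also have "\<dots> = (?c \<circ> ?d) \<circ> y" using cycles_commute[OF cs] by simp
  finally show ?thesis .
qed

lemma cycle_of_list_comp_fixes:
  "x \<notin> set cs \<Longrightarrow> x \<notin> set ds \<Longrightarrow> (cycle_of_list cs \<circ> cycle_of_list ds) x = x"
  by (simp add: id_outside_supp)

lemma power_linked_transposition_if_fixes_three:
  assumes S: "finite S" "5 \<le> card S" and y: "y \<in> nontrivial_perms S" "y ^^ 2 = id"
    and abc: "cycle [a, b, c]" "set [a, b, c] \<subseteq> S" "y a = a" "y b = b" "y c = c"
  shows "\<exists>t\<in>transpositions S. power_linked S y t"
proof -
  let ?z = "cycle_of_list [a, b, c]"
  obtain d where d: "d \<in> S" "d \<notin> set [a, b, c]"
    using exists_fresh[OF S(1), of "[a, b, c]"] S(2) by auto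
  obtain e where e: "e \<in> S" "e \<notin> set [a, b, c, d]"
    using exists_fresh[OF S(1), of "[a, b, c, d]"] S(2) by auto
  have z: "?z \<in> nontrivial_perms S" "?z ^^ 3 = id"
    using cycle_of_list_in_nontrivial_perms[OF abc(1) _ abc(2)] cycle_of_list_3_funpow_3[OF abc(1)]
    by simp_all
  have "power_linked S ?z (transpose d e)"
  proof (rule power_linked_transpose_if_fixed[OF z _ d(1) e(1)])
    show "d \<noteq> e" using e(2) by auto
    show "?z d = d" by (rule id_outside_supp[OF d(2)])
    show "?z e = e" by (rule id_outside_supp) (use e(2) in auto)
  qed simp
  then have "power_linked S y (transpose d e)"
    by (rule graph_linked_trans[OF power_linked_cycle3_if_fixed[OF y abc]])
  moreover have "transpose d e \<in> transpositions S"
    using d(1) e unfolding transpositions_def by auto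
  ultimately show ?thesis by blast
qed

lemma cycle_of_list_3_pair:
  assumes "y permutes S" "cycle ([a1, a2, a3] @ map y [a1, a2, a3])" "set [a1, a2, a3] \<subseteq> S"
  shows "cycle_of_list [a1, a2, a3] \<circ> cycle_of_list (map y [a1, a2, a3]) \<in> nontrivial_perms S"
    and "(cycle_of_list [a1, a2, a3] \<circ> cycle_of_list (map y [a1, a2, a3])) ^^ 3 = id"
proof -
  let ?as = "[a1, a2, a3]"
  let ?z = "cycle_of_list ?as \<circ> cycle_of_list (map y ?as)"
  have cycles: "cycle ?as" "cycle (map y ?as)" "set ?as \<inter> set (map y ?as) = {}"
    using assms(2) by auto
  have "cycle [y a1, y a2, y a3]" using cycles(2) by simp
  then have "cycle_of_list (map y ?as) ^^ 3 = id"
    using cycle_of_list_3_funpow_3 by (simp only: list.map)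
  then show "?z ^^ 3 = id"
    using funpow_comp_distrib[OF cycles_commute[OF cycles]] cycle_of_list_3_funpow_3[OF cycles(1)]
    by (simp only: comp_id)
  have "?z a1 = a2" using assms(2) by (simp add: id_outside_supp)
  moreover have "a1 \<noteq> a2" using assms(2) by simp
  ultimately have "?z \<noteq> id" by (metis id_apply)
  moreover have "set (map y ?as) \<subseteq> S" using assms(3) permutes_in_image[OF assms(1)] by auto
  then have "?z permutes S"
    using permutes_compose[OF permutes_subset[OF cycle_permutes]
        permutes_subset[OF cycle_permutes assms(3)]]
    by blast
  ultimately show "?z \<in> nontrivial_perms S" by (simp add: nontrivial_perms_def)
qed

lemma power_linked_transposition_if_swaps_three:
  assumes S: "finite S" "8 \<le> card S" and y: "y \<in> nontrivial_perms S" "y ^^ 2 = id"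
    and as: "cycle ([a1, a2, a3] @ map y [a1, a2, a3])" "set [a1, a2, a3] \<subseteq> S"
  shows "\<exists>t\<in>transpositions S. power_linked S y t"
proof -
  let ?as = "[a1, a2, a3]"
  let ?z = "cycle_of_list ?as \<circ> cycle_of_list (map y ?as)"
  have yS: "y permutes S" using y(1) by (simp add: nontrivial_perms_def)
  have "y \<circ> y = id" using y(2) by (simp add: numeral_2_eq_2)
  then have comm: "y \<circ> ?z = ?z \<circ> y"
    by (rule comp_cycle_of_list_pair_commute[OF permutes_bij[OF yS] _ as(1)])
  note z = cycle_of_list_3_pair[OF yS as]
  obtain d where d: "d \<in> S" "d \<notin> set (?as @ map y ?as)"
    using exists_fresh[OF S(1), of "?as @ map y ?as"] S(2) by auto
  obtain e where e: "e \<in> S" "e \<notin> set (d # ?as @ map y ?as)"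
    using exists_fresh[OF S(1), of "d # ?as @ map y ?as"] S(2) by auto
  have "power_linked S y ?z"
    by (rule power_linked_coprime_orders[OF y(1) z(1) comm y(2) z(2)]) simp
  moreover have "power_linked S ?z (transpose d e)"
  proof (rule power_linked_transpose_if_fixed[OF z _ d(1) e(1)])
    show "d \<noteq> e" using e(2) by auto
    show "?z d = d" by (rule cycle_of_list_comp_fixes) (use d(2) in auto)
    show "?z e = e" by (rule cycle_of_list_comp_fixes) (use e(2) in auto)
  qed simp
  moreover have "transpose d e \<in> transpositions S"
    using d(1) e unfolding transpositions_def by auto
  ultimately show ?thesis by (blast intro: graph_linked_trans)
qed

text \<open>An involution of a set of at least nine points fixes three of them or swaps three pairs.\<close>
lemma power_linked_involution_transposition:
  assumes S: "finite S" "9 \<le> card S" and y: "y \<in> nontrivial_perms S" "y ^^ 2 = id"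
  shows "\<exists>t\<in>transpositions S. power_linked S y t"
proof (cases "\<exists>a b c. cycle [a, b, c] \<and> set [a, b, c] \<subseteq> S \<and> y a = a \<and> y b = b \<and> y c = c")
  case True
  then obtain a b c where abc: "cycle [a, b, c]" "set [a, b, c] \<subseteq> S" "y a = a" "y b = b" "y c = c"
    by blast
  show ?thesis
    by (rule power_linked_transposition_if_fixes_three[OF S(1) _ y abc]) (use S(2) in simp)
next
  case False
  have yy: "y (y w) = w" for w using fun_cong[OF y(2), of w] by (simp add: numeral_2_eq_2)
  define F where "F = {w \<in> S. y w = w}"
  have "card F < 3"
  proof (rule ccontr)
    assume "\<not> card F < 3"
    then have fresh: "\<exists>a\<in>F. a \<notin> set xs" if "length xs \<le> 2" for xs :: "'a list"
      using exists_fresh[of F xs] that S(1) unfolding F_def by simp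
    obtain a where "a \<in> F" using fresh[of "[]"] by auto
    moreover obtain b where "b \<in> F" "b \<notin> set [a]" using fresh[of "[a]"] by auto
    moreover obtain c where "c \<in> F" "c \<notin> set [a, b]" using fresh[of "[a, b]"] by auto
    ultimately show False using False unfolding F_def by auto
  qed
  then have "7 \<le> card (S - F)"
    using S card_Diff_subset[of F S] card_mono[OF S(1), of F] unfolding F_def
    by (simp add: finite_subset)
  then have fresh: "\<exists>a\<in>S - F. a \<notin> set xs" if "length xs \<le> 4" for xs :: "'a list"
    using exists_fresh[of "S - F" xs] that S(1) by simp
  obtain a1 where a1: "a1 \<in> S - F" using fresh[of "[]"] by auto
  obtain a2 where a2: "a2 \<in> S - F" "a2 \<notin> set [a1, y a1]" using fresh[of "[a1, y a1]"] by auto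
  obtain a3 where a3: "a3 \<in> S - F" "a3 \<notin> set [a1, y a1, a2, y a2]"
    using fresh[of "[a1, y a1, a2, y a2]"] by auto
  have "cycle ([a1, a2, a3] @ map y [a1, a2, a3])"
    using a1 a2 a3 yy unfolding F_def by auto (metis yy)+
  moreover have "set [a1, a2, a3] \<subseteq> S" using a1 a2 a3 by auto
  ultimately show ?thesis
    using power_linked_transposition_if_swaps_three[OF S(1) _ y] S(2) by simp
qed

lemma involution_permutes:
  assumes "\<And>w. t (t w) = w" "\<And>w. w \<notin> S \<Longrightarrow> t w = w"
  shows "t permutes S"
  unfolding permutes_def
proof (intro conjI allI impI)
  fix v
  show "\<exists>!w. t w = v"
  proof (rule ex1I)
    show "t (t v) = v" by (rule assms(1))
    show "w = t v" if "t w = v" for w using assms(1)[of w] that by simp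
  qed
qed (rule assms(2))

lemma funpow_orbit_preimage:
  assumes "y ^^ p = id" "0 < p" "y w \<in> range (\<lambda>k. (y ^^ k) x)"
  shows "w \<in> range (\<lambda>k. (y ^^ k) x)"
proof -
  obtain k where k: "y w = (y ^^ k) x" using assms(3) by blast
  have "w = (y ^^ p) w" using assms(1) by simp
  also have "\<dots> = (y ^^ (p - 1)) (y w)"
    using assms(2) funpow_Suc_right[of "p - 1" y] by simp
  also have "\<dots> = (y ^^ (p - 1 + k)) x" using k by (simp add: funpow_add)
  finally show ?thesis by (rule range_eqI)
qed

text \<open>Exchanges (y ^^ k) x1 and (y ^^ k) x2 for all k; which k is chosen does not matter when y
  has prime order.\<close>
definition orbit_swap :: "('a \<Rightarrow> 'a) \<Rightarrow> 'a \<Rightarrow> 'a \<Rightarrow> 'a \<Rightarrow> 'a" where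
  "orbit_swap y x1 x2 w =
    (if w \<in> range (\<lambda>k. (y ^^ k) x1) then (y ^^ (SOME k. (y ^^ k) x1 = w)) x2
     else if w \<in> range (\<lambda>k. (y ^^ k) x2) then (y ^^ (SOME k. (y ^^ k) x2 = w)) x1
     else w)"

lemma orbit_swap_other:
  "w \<notin> range (\<lambda>k. (y ^^ k) x1) \<Longrightarrow> w \<notin> range (\<lambda>k. (y ^^ k) x2) \<Longrightarrow> orbit_swap y x1 x2 w = w"
  by (simp add: orbit_swap_def)

context
  fixes y :: "'a \<Rightarrow> 'a" and p :: nat and x1 x2 :: 'a
  assumes order: "y ^^ p = id" "Factorial_Ring.prime p" and inj: "inj y"
    and moved: "y x1 \<noteq> x1" "y x2 \<noteq> x2" and other_orbit: "x2 \<notin> range (\<lambda>k. (y ^^ k) x1)"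
begin

lemma orbits_disjoint: "(y ^^ i) x2 \<notin> range (\<lambda>k. (y ^^ k) x1)"
proof
  assume "(y ^^ i) x2 \<in> range (\<lambda>k. (y ^^ k) x1)"
  then obtain j where j: "(y ^^ i) x2 = (y ^^ j) x1" by blast
  have "y ^^ ((p - 1) * i + i) = id"
    using funpow_eq_id_dvd[OF order(1)] prime_gt_0_nat[OF order(2)] by (simp add: algebra_simps)
  then have "x2 = (y ^^ ((p - 1) * i)) ((y ^^ i) x2)" by (metis funpow_add comp_apply id_apply)
  then have "x2 = (y ^^ ((p - 1) * i + j)) x1" using j by (simp add: funpow_add)
  then show False using other_orbit by blast
qed

lemma orbit_swap_first: "orbit_swap y x1 x2 ((y ^^ i) x1) = (y ^^ i) x2"
proof -
  have "(y ^^ (SOME k. (y ^^ k) x1 = (y ^^ i) x1)) x1 = (y ^^ i) x1"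
    by (rule someI[of _ i]) simp
  then have "y ^^ (SOME k. (y ^^ k) x1 = (y ^^ i) x1) = y ^^ i"
    by (rule funpow_prime_order_eq[OF order inj moved(1)])
  then show ?thesis unfolding orbit_swap_def by simp
qed

lemma orbit_swap_second: "orbit_swap y x1 x2 ((y ^^ i) x2) = (y ^^ i) x1"
proof -
  have "(y ^^ (SOME k. (y ^^ k) x2 = (y ^^ i) x2)) x2 = (y ^^ i) x2"
    by (rule someI[of _ i]) simp
  then have "y ^^ (SOME k. (y ^^ k) x2 = (y ^^ i) x2) = y ^^ i"
    by (rule funpow_prime_order_eq[OF order inj moved(2)])
  then show ?thesis using orbits_disjoint unfolding orbit_swap_def by simp
qed

lemma orbit_swap_involutive: "orbit_swap y x1 x2 (orbit_swap y x1 x2 w) = w"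
proof -
  consider i where "w = (y ^^ i) x1" | i where "w = (y ^^ i) x2"
    | "w \<notin> range (\<lambda>k. (y ^^ k) x1)" "w \<notin> range (\<lambda>k. (y ^^ k) x2)"
    by blast
  then show ?thesis by cases (simp_all add: orbit_swap_first orbit_swap_second orbit_swap_other)
qed

lemma orbit_swap_commute: "orbit_swap y x1 x2 \<circ> y = y \<circ> orbit_swap y x1 x2"
proof
  fix w
  consider i where "w = (y ^^ i) x1" | i where "w = (y ^^ i) x2"
    | "w \<notin> range (\<lambda>k. (y ^^ k) x1)" "w \<notin> range (\<lambda>k. (y ^^ k) x2)"
    by blast
  then show "(orbit_swap y x1 x2 \<circ> y) w = (y \<circ> orbit_swap y x1 x2) w"
  proof cases
    case 1
    then show ?thesis using orbit_swap_first[of i] orbit_swap_first[of "Suc i"] by simp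
  next
    case 2
    then show ?thesis using orbit_swap_second[of i] orbit_swap_second[of "Suc i"] by simp
  next
    case 3
    moreover have "y w \<notin> range (\<lambda>k. (y ^^ k) x1)" "y w \<notin> range (\<lambda>k. (y ^^ k) x2)"
      using 3 funpow_orbit_preimage[OF order(1) prime_gt_0_nat[OF order(2)]] by blast+
    ultimately show ?thesis by (simp add: orbit_swap_other)
  qed
qed

lemma orbit_swap_in_nontrivial_perms:
  assumes "y permutes S"
  shows "orbit_swap y x1 x2 \<in> nontrivial_perms S"
proof -
  have "x1 \<in> S" "x2 \<in> S" using moved assms by (meson permutes_not_in)+
  then have "range (\<lambda>k. (y ^^ k) x1) \<subseteq> S" "range (\<lambda>k. (y ^^ k) x2) \<subseteq> S"
    using permutes_in_image[OF permutes_funpow[OF assms]] by blast+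
  then have "orbit_swap y x1 x2 permutes S"
    by (intro involution_permutes orbit_swap_involutive orbit_swap_other) auto
  moreover have "orbit_swap y x1 x2 \<noteq> id"
    using orbit_swap_first[of 0] other_orbit by (metis funpow_0 id_apply rangeI)
  ultimately show ?thesis by (simp add: nontrivial_perms_def)
qed

end

lemma exists_moved_point_outside_orbit:
  assumes S: "finite S" "\<not> Factorial_Ring.prime (card S)" "\<not> Factorial_Ring.prime (card S - 1)"
    and y: "y permutes S" "y ^^ p = id" "Factorial_Ring.prime p" "y x1 \<noteq> x1"
    and fixed: "card {w \<in> S. y w = w} \<le> 1"
  obtains x2 where "y x2 \<noteq> x2" "x2 \<notin> range (\<lambda>k. (y ^^ k) x1)"
proof -
  let ?O = "range (\<lambda>k. (y ^^ k) x1)" and ?F = "{w \<in> S. y w = w}"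
  have "x1 \<in> S" using y(1,4) by (meson permutes_not_in)
  then have OS: "?O \<subseteq> S" using permutes_in_image[OF permutes_funpow[OF y(1)]] by blast
  have card_O: "card ?O = p" by (rule card_funpow_orbit_prime[OF y(2,3,4)])
  have "\<not> S \<subseteq> ?O \<union> ?F"
  proof
    assume "S \<subseteq> ?O \<union> ?F"
    moreover have "finite (?O \<union> ?F)" using finite_subset[OF OS S(1)] S(1) by simp
    ultimately have "card S \<le> card (?O \<union> ?F)" by (rule card_mono[rotated])
    also have "\<dots> \<le> card ?O + card ?F" by (rule card_Un_le)
    finally have "card S \<le> p + 1" using card_O fixed by linarith
    moreover have "p \<le> card S" using card_mono[OF S(1) OS] card_O by simp
    ultimately have "card S = p \<or> card S - 1 = p" by linarith
    then show False using S(2,3) y(3) by auto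
  qed
  then show thesis using that by blast
qed

text \<open>If y fixes two points it commutes with the transposition of them. Otherwise, as neither
  card S nor card S - 1 is prime, y has two nontrivial orbits, and the involution swapping them
  commutes with y.\<close>
lemma power_linked_odd_prime_order_transposition:
  assumes S: "finite S" "9 \<le> card S"
      "\<not> Factorial_Ring.prime (card S)" "\<not> Factorial_Ring.prime (card S - 1)"
    and y: "y \<in> nontrivial_perms S" "y ^^ p = id" "Factorial_Ring.prime p" "odd p"
  shows "\<exists>t\<in>transpositions S. power_linked S y t"
proof (cases "card {w \<in> S. y w = w} \<le> 1")
  case False
  then obtain a b where ab: "a \<in> S" "b \<in> S" "a \<noteq> b" "y a = a" "y b = b"
    using card_le_Suc0_iff_eq[of "{w \<in> S. y w = w}"] S(1) by auto
  have "transpose a b \<in> transpositions S" using ab unfolding transpositions_def by blast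
  moreover have "power_linked S y (transpose a b)"
    by (rule power_linked_transpose_if_fixed[OF y(1,2,4) ab])
  ultimately show ?thesis by blast
next
  case True
  have yS: "y permutes S" using y(1) by (simp add: nontrivial_perms_def)
  have "y \<noteq> id" using y(1) by (simp add: nontrivial_perms_def)
  then obtain x1 where x1: "y x1 \<noteq> x1" by (meson eq_id_iff)
  obtain x2 where x2: "y x2 \<noteq> x2" "x2 \<notin> range (\<lambda>k. (y ^^ k) x1)"
    by (rule exists_moved_point_outside_orbit[OF S(1,3,4) yS y(2,3) x1 True])
  let ?t = "orbit_swap y x1 x2"
  have inj: "inj y" using yS by (rule permutes_inj)
  have t: "?t \<in> nontrivial_perms S" "?t \<circ> y = y \<circ> ?t" "?t ^^ 2 = id"
    using orbit_swap_in_nontrivial_perms[OF y(2,3) inj x1 x2 yS]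
      orbit_swap_commute[OF y(2,3) inj x1 x2] orbit_swap_involutive[OF y(2,3) inj x1 x2]
    by (auto simp: numeral_2_eq_2)
  have "power_linked S y ?t"
    by (rule power_linked_coprime_orders[OF y(1) t(1) t(2)[symmetric] y(2) t(3)]) (use y(4) in simp)
  moreover obtain t' where "t' \<in> transpositions S" "power_linked S ?t t'"
    using power_linked_involution_transposition[OF S(1,2) t(1,3)] by blast
  ultimately show ?thesis by (blast intro: graph_linked_trans)
qed

theorem connected_power_graph_nontrivial_perms:
  assumes S: "finite S" "9 \<le> card S"
      "\<not> Factorial_Ring.prime (card S)" "\<not> Factorial_Ring.prime (card S - 1)"
  shows "graph_connected_on (nontrivial_perms S) power_adjacent"
proof -
  have to_transposition: "\<exists>t\<in>transpositions S. power_linked S x t" if x: "x \<in> nontrivial_perms S" for x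
  proof -
    obtain p y where y: "Factorial_Ring.prime p" "y \<in> nontrivial_perms S" "y ^^ p = id"
      and xy: "power_linked S x y"
      by (rule power_linked_prime_order[OF S(1) x])
    have "\<exists>t\<in>transpositions S. power_linked S y t"
    proof (cases "p = 2")
      case True
      then show ?thesis using power_linked_involution_transposition[OF S(1,2) y(2)] y(3) by simp
    next
      case False
      then have "2 < p" using prime_ge_2_nat[OF y(1)] by linarith
      then have "odd p" by (rule prime_odd_nat[OF y(1)])
      then show ?thesis by (rule power_linked_odd_prime_order_transposition[OF S y(2,3,1)])
    qed
    then show ?thesis by (blast intro: graph_linked_trans[OF xy])
  qed
  show ?thesis unfolding graph_connected_on_iff_linked
  proof (intro ballI)
    fix x x' assume "x \<in> nontrivial_perms S" "x' \<in> nontrivial_perms S"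
    then obtain t t' where t: "t \<in> transpositions S" "power_linked S x t"
      and t': "t' \<in> transpositions S" "power_linked S x' t'"
      using to_transposition by blast
    have "power_linked S t t'"
      by (rule power_linked_transpositions[OF S(1) _ t(1) t'(1)]) (use S(2) in simp)
    then show "power_linked S x x'"
      using graph_linked_trans[OF graph_linked_trans[OF t(2)] power_linked_sym[OF t'(2)]] by simp
  qed
qed

section \<open>Centralisers of cycles\<close>

lemma cycle_of_list_funpow_nth:
  assumes "cycle cs" "i < length cs"
  shows "(cycle_of_list cs ^^ n) (cs ! i) = cs ! ((n + i) mod length cs)"
  using arg_cong[OF cyclic_rotation[OF assms(1), of n], of "\<lambda>xs. xs ! i"] assms(2)
  by (simp add: nth_rotate)

lemma cycle_of_list_moves:
  assumes "cycle cs" "2 \<le> length cs" "w \<in> set cs"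
  shows "cycle_of_list cs w \<noteq> w"
proof -
  obtain i where i: "i < length cs" "w = cs ! i" using assms(3) by (auto simp: in_set_conv_nth)
  have "Suc i mod length cs \<noteq> i"
    using i(1) assms(2) by (cases "Suc i < length cs") (auto simp: mod_if)
  moreover have "Suc i mod length cs < length cs" by (rule mod_less_divisor) (use i(1) in linarith)
  ultimately have "cs ! (Suc i mod length cs) \<noteq> cs ! i"
    using nth_eq_iff_index_eq[OF assms(1), of "Suc i mod length cs" i] i(1) by simp
  then show ?thesis using cycle_of_list_funpow_nth[OF assms(1) i(1), of 1] i(2) by simp
qed

lemma commute_fixed_point_iff:
  assumes "inj x" "x \<circ> c = c \<circ> x"
  shows "c (x w) = x w \<longleftrightarrow> c w = w"
  using fun_cong[OF assms(2), of w, symmetric] inj_eq[OF assms(1)] by simp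

lemma commute_cycle_of_list_eq_funpow:
  assumes cs: "cycle cs" "2 \<le> length cs"
    and x: "x permutes S" "S \<subseteq> insert s (set cs)"
    and comm: "x \<circ> cycle_of_list cs = cycle_of_list cs \<circ> x"
  shows "\<exists>k. x = cycle_of_list cs ^^ k"
proof -
  let ?c = "cycle_of_list cs"
  have moved_iff: "?c w \<noteq> w \<longleftrightarrow> w \<in> set cs" for w
    using cycle_of_list_moves[OF cs, of w] id_outside_supp[of w cs] by blast
  have x_moved: "?c (x w) \<noteq> x w \<longleftrightarrow> ?c w \<noteq> w" for w
    using commute_fixed_point_iff[OF permutes_inj[OF x(1)] comm] by simp
  have cs0: "0 < length cs" using cs(2) by linarith
  have "x (cs ! 0) \<in> set cs" using x_moved moved_iff nth_mem[OF cs0] by blast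
  then obtain i where i: "i < length cs" "x (cs ! 0) = cs ! i" by (auto simp: in_set_conv_nth)
  have "x (cs ! 0) = (?c ^^ i) (cs ! 0)" using i cycle_of_list_funpow_nth[OF cs(1) cs0, of i] by simp
  have "x w = (?c ^^ i) w" for w
  proof (cases "w \<in> set cs")
    case True
    then obtain j where "j < length cs" "w = cs ! j" by (auto simp: in_set_conv_nth)
    then have w: "w = (?c ^^ j) (cs ! 0)" using cycle_of_list_funpow_nth[OF cs(1) cs0, of j] by simp
    have "x w = (?c ^^ j) (x (cs ! 0))"
      using fun_cong[OF comp_funpow_commute[OF comm], of j "cs ! 0"] w by simp
    also have "\<dots> = (?c ^^ i) w"
      using \<open>x (cs ! 0) = (?c ^^ i) (cs ! 0)\<close> w by (simp add: funpow_commute_apply)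
    finally show ?thesis .
  next
    case False
    have "(?c ^^ i) w = w"
      using permutes_not_in[OF permutes_funpow[OF cycle_permutes] False] .
    moreover have "x w = w"
    proof (cases "w \<in> S")
      case True
      have "x w \<notin> set cs" using x_moved moved_iff False by blast
      moreover have "x w \<in> S" using permutes_in_image[OF x(1)] True by blast
      ultimately show ?thesis using x(2) True False by blast
    qed (rule permutes_not_in[OF x(1)])
    ultimately show ?thesis by simp
  qed
  then show ?thesis by blast
qed

text \<open>A vertex commuting with s is a nontrivial power of s, so s is one of its powers and its
  neighbours commute with s as well.\<close>
lemma graph_linked_commuting_prime_order:
  assumes "graph_linked V E s v"
    and comm: "\<And>a b. a \<in> V \<Longrightarrow> b \<in> V \<Longrightarrow> E a b \<Longrightarrow> a \<circ> b = b \<circ> a"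
    and s: "s ^^ p = id" "Factorial_Ring.prime p" and "id \<notin> V"
    and centralizer: "\<And>x. x \<in> V \<Longrightarrow> x \<circ> s = s \<circ> x \<Longrightarrow> \<exists>k. x = s ^^ k"
  shows "v \<circ> s = s \<circ> v"
  using assms(1) refl
proof (rule graph_linked_invariant)
  fix a b assume ab: "a \<in> V" "b \<in> V" "E a b" and "a \<circ> s = s \<circ> a"
  then obtain k where k: "a = s ^^ k" using centralizer by blast
  then have "s ^^ k \<noteq> id" using ab(1) \<open>id \<notin> V\<close> by auto
  then obtain j where j: "(s ^^ k) ^^ j = s" by (rule funpow_prime_order_generates[OF s])
  have "b \<circ> a = a \<circ> b" using comm[OF ab] by simp
  then have "b \<circ> a ^^ j = a ^^ j \<circ> b" by (rule comp_funpow_commute)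
  then show "b \<circ> s = s \<circ> b" using j k by simp
qed

lemma not_connected_commuting_graph_prime:
  fixes n m :: nat
  assumes comm: "\<And>a b. E a b \<Longrightarrow> a \<circ> b = b \<circ> a"
    and m: "Factorial_Ring.prime m" "m = n \<or> m = n - 1" "3 \<le> m"
  shows "\<not> graph_connected_on (nontrivial_perms {1..n}) E"
proof
  assume connected: "graph_connected_on (nontrivial_perms {1..n}) E"
  define cs where "cs = [1..<Suc m]"
  let ?s = "cycle_of_list cs"
  have cs: "cycle cs" "length cs = m" "set cs = {1..m}" unfolding cs_def by auto
  have "set cs \<subseteq> {1..n}" "{1..n} \<subseteq> insert n (set cs)" using cs(3) m(2) by auto
  have s: "?s \<in> nontrivial_perms {1..n}"
    by (rule cycle_of_list_in_nontrivial_perms[OF cs(1)]) (use cs(2) m(3) \<open>set cs \<subseteq> {1..n}\<close> in auto)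
  have t: "transpose 1 2 \<in> nontrivial_perms {1..n}"
    by (rule transpose_in_nontrivial_perms) (use m in auto)
  have "graph_linked (nontrivial_perms {1..n}) E ?s (transpose 1 2)"
    using connected s t unfolding graph_connected_on_iff_linked by blast
  then have "transpose 1 2 \<circ> ?s = ?s \<circ> transpose 1 2"
  proof (rule graph_linked_commuting_prime_order[OF _ comm _ m(1)])
    show "?s ^^ m = id" using cycle_is_id_root[OF cs(1)] cs(2) by simp
    show "id \<notin> nontrivial_perms {1..n}" by (simp add: nontrivial_perms_def)
    show "\<exists>k. x = ?s ^^ k" if "x \<in> nontrivial_perms {1..n}" "x \<circ> ?s = ?s \<circ> x" for x
      using that commute_cycle_of_list_eq_funpow[OF cs(1) _ _ \<open>{1..n} \<subseteq> insert n (set cs)\<close>]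
        cs(2) m(3) by (auto simp: nontrivial_perms_def)
  qed
  then have "(transpose 1 2 \<circ> ?s) 1 = (?s \<circ> transpose 1 2) 1" by (rule fun_cong)
  moreover have "?s 1 = 2" "?s 2 = 3"
  proof -
    have nth: "cs ! i = Suc i" if "i < m" for i using that unfolding cs_def by (simp del: upt_Suc)
    then show "?s 1 = 2" "?s 2 = 3"
      using cycle_of_list_funpow_nth[OF cs(1), of 0 1] cycle_of_list_funpow_nth[OF cs(1), of 1 1]
        cs(2) m(3) by (simp_all add: numeral_2_eq_2 numeral_3_eq_3)
  qed
  ultimately show False by simp
qed

section \<open>The deep commuting graph of the symmetric group\<close>

lemma sym_group_nat_pow: "x [^]\<^bsub>sym_group n\<^esub> (k::nat) = x ^^ k"
  by (induction k) (simp_all add: sym_group_def fun_eq_iff funpow_swap1)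

lemma exists_transpose_not_commute:
  assumes "finite S" "3 \<le> card S" "x \<in> nontrivial_perms S"
  obtains a b where "a \<in> S" "b \<in> S" "x \<circ> transpose a b \<noteq> transpose a b \<circ> x"
proof -
  have xS: "x permutes S" and "x \<noteq> id" using assms(3) by (auto simp: nontrivial_perms_def)
  then obtain a where a: "x a \<noteq> a" by (meson eq_id_iff)
  then have "a \<in> S" using xS by (meson permutes_not_in)
  then have "x a \<in> S" using xS by (simp add: permutes_in_image)
  obtain c where c: "c \<in> S" "c \<notin> set [a, x a]"
    using exists_fresh[OF assms(1), of "[a, x a]"] assms(2) by auto
  have "(x \<circ> transpose (x a) c) a = x a" using a c by (auto simp: transpose_def)
  moreover have "(transpose (x a) c \<circ> x) a = c" by simp
  ultimately have "x \<circ> transpose (x a) c \<noteq> transpose (x a) c \<circ> x"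
    using c(2) by (metis list.set_intros(2) list.set_intros(1))
  then show thesis using that \<open>x a \<in> S\<close> c(1) by blast
qed

lemma reduced_vertices_sym_group:
  assumes stem: "stem_extension H \<phi> (sym_group n)" and "3 \<le> n"
  shows "reduced_vertices H \<phi> (sym_group n) = nontrivial_perms {1..n}"
proof (intro equalityI subsetI)
  fix x assume "x \<in> reduced_vertices H \<phi> (sym_group n)"
  then show "x \<in> nontrivial_perms {1..n}"
    using deep_dominant_one[OF stem]
    by (auto simp: reduced_vertices_def nontrivial_perms_def sym_group_carrier sym_group_one)
next
  fix x assume x: "x \<in> nontrivial_perms {1..n}"
  obtain a b where "a \<in> {1..n}" "b \<in> {1..n}" "x \<circ> transpose a b \<noteq> transpose a b \<circ> x"
    using exists_transpose_not_commute[OF _ _ x] assms(2) by auto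
  then have "\<not> deep_dominant H \<phi> (sym_group n) x"
    using not_deep_dominant[OF stem, of "transpose a b" x]
    by (simp add: sym_group_carrier sym_group_mult permutes_swap_id)
  then show "x \<in> reduced_vertices H \<phi> (sym_group n)"
    using x by (simp add: reduced_vertices_def nontrivial_perms_def sym_group_carrier)
qed

lemma deep_adj_sym_group_if_power_adjacent:
  assumes stem: "stem_extension H \<phi> (sym_group n)"
    and "x permutes {1..n}" "y permutes {1..n}" "power_adjacent x y"
  shows "deep_adj H \<phi> (sym_group n) x y"
proof -
  have pow: "deep_adj H \<phi> (sym_group n) z (z ^^ k)" if "z permutes {1..n}" "z ^^ k \<noteq> z" for z k
    using deep_adj_nat_pow[OF stem, of z k] that by (simp add: sym_group_carrier sym_group_nat_pow)
  obtain k where "x \<noteq> y" and k: "y = x ^^ k \<or> x = y ^^ k"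
    using assms(4) unfolding power_adjacent_def by blast
  from k show ?thesis
  proof
    assume "y = x ^^ k"
    then show ?thesis using pow[OF assms(2)] \<open>x \<noteq> y\<close> by simp
  next
    assume "x = y ^^ k"
    then have "deep_adj H \<phi> (sym_group n) y x" using pow[OF assms(3)] \<open>x \<noteq> y\<close> by simp
    then show ?thesis by (rule sympD[OF deep_adj_sym])
  qed
qed

lemma nine_le_if_not_prime:
  fixes n :: nat
  assumes "6 \<le> n" "\<not> Factorial_Ring.prime n" "\<not> Factorial_Ring.prime (n - 1)"
  shows "9 \<le> n"
proof -
  have "Factorial_Ring.prime (5::nat)" "Factorial_Ring.prime (7::nat)"
    by (simp_all add: prime_nat_iff' atLeastLessThan_nat_numeral)
  then have "n \<noteq> 6" "n \<noteq> 7" "n \<noteq> 8" using assms(2,3) by auto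
  then show ?thesis using assms(1) by linarith
qed

theorem theorem5p25:
  fixes n :: nat and H :: "('c, 'd) monoid_scheme" and \<phi> :: "'c \<Rightarrow> (nat \<Rightarrow> nat)"
  assumes "n \<ge> 6"
    and "schur_cover H \<phi> (sym_group n)"
  shows "graph_connected_on (reduced_vertices H \<phi> (sym_group n)) (deep_adj H \<phi> (sym_group n))
           \<longleftrightarrow> \<not> Factorial_Ring.prime n \<and> \<not> Factorial_Ring.prime (n - 1)"
proof -
  have stem: "stem_extension H \<phi> (sym_group n)" using assms(2) by (simp add: schur_cover_def)
  have reduced: "reduced_vertices H \<phi> (sym_group n) = nontrivial_perms {1..n}"
    by (rule reduced_vertices_sym_group[OF stem]) (use assms(1) in simp)
  have commute: "a \<circ> b = b \<circ> a" if "deep_adj H \<phi> (sym_group n) a b" for a b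
    using deep_adj_imp_commute[OF stem that] by (simp add: sym_group_mult)
  show ?thesis unfolding reduced
  proof
    assume "graph_connected_on (nontrivial_perms {1..n}) (deep_adj H \<phi> (sym_group n))"
    then show "\<not> Factorial_Ring.prime n \<and> \<not> Factorial_Ring.prime (n - 1)"
      using not_connected_commuting_graph_prime[OF commute, where m = n]
        not_connected_commuting_graph_prime[OF commute, where m = "n - 1"] assms(1) by auto
  next
    assume "\<not> Factorial_Ring.prime n \<and> \<not> Factorial_Ring.prime (n - 1)"
    then have "graph_connected_on (nontrivial_perms {1..n}) power_adjacent"
      using connected_power_graph_nontrivial_perms[of "{1..n}"] nine_le_if_not_prime assms(1) by simp
    then show "graph_connected_on (nontrivial_perms {1..n}) (deep_adj H \<phi> (sym_group n))"
      by (rule graph_connected_on_mono)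
        (auto simp: nontrivial_perms_def intro: deep_adj_sym_group_if_power_adjacent[OF stem])
  qed
qed

end
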